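(* Let $d$ be even and let $k$ be a number of colors with $k < \frac{11}{6}d$ (and $k$ large enough that the colorings below exist). Let $\mathcal{C}^*=\{(G_i,\sigma_i,\tau_i)\}_{1\le i\le 4}$ be the four neighboring coloring pairs described in the context. Then there is no choice of flip probabilities $\{p_\alpha\}_{\alpha\in\mathbb{N}}$ and no one-step coupling $(\sigma,\tau)\mapsto(\sigma',\tau')$ of the flip dynamics with these flip probabilities such that $\mathbb{E}[d(\sigma',\tau')-1]<0$ holds for all $(G,\sigma,\tau)\in\mathcal{C}^*$, where $d(\cdot,\cdot)$ is Hamming distance.
   Context: For a graph $G=(V,E)$ and a coloring $\sigma:V\to[k]$ (not necessarily proper), a vertex $v$ and a color $c$, let $S_\sigma(v,c)$ be the set of vertices $w$ reachable from $v$ by a path whose vertices alternate between colors $\sigma(v)$ and $c$ (with $S_\sigma(v,\sigma(v))=\emptyset$); flipping it swaps colors $\sigma(v)$ and $c$ on it. Given flip probabilities $\{p_\alpha\}\subset[0,1]$, the flip dynamics picks a uniformly random vertex $v$ and uniformly random color $c\in[k]$, and flips $S_\sigma(v,c)$ with probability $p_\alpha/\alpha$ where $\alpha=|S_\sigma(v,c)|$. A one-step coupling is any joint distribution of $(\sigma',\tau')$ where $\sigma'$ (resp. $\tau'$) is distributed as one step of the flip dynamics from $\sigma$ (resp. $\tau$). The Hamming distance $d(\sigma,\tau)$ is the number of vertices where $\sigma,\tau$ differ. A neighboring coloring pair $(G,\sigma,\tau)$ consists of a graph and two colorings differing at exactly one vertex $v$. The family $\mathcal{C}^*$: $G_1$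 is the tree of height two rooted at $v$, where $v$ has exactly $d$ children $u_1,\dots,u_d$ and each $u_i$ has exactly two children $w^i_1,w^i_2$. In $\sigma_1,\tau_1$ (which differ only at $v$, with $\sigma_1(v)\ne\tau_1(v)$), $u_{2j-1}$ and $u_{2j}$ get color $c_j$ for $j=1,\dots,d/2$, where the $c_j$ are distinct colors different from $\sigma_1(v),\tau_1(v)$, and every $w^i_\ell$ gets color $\sigma_1(v)$. For $a=2,3,4$, $G_a$ is the tree rooted at $v$ consisting of $d$ disjoint paths, each with $a$ vertices, each attached to $v$ at one endpoint; let $u_1,\dots,u_d$ be the neighbors of $v$. In $\sigma_a,\tau_a$ (differing only at $v$, with $\sigma_a(v)\neq\tau_a(v)$), each $u_i$ gets a distinct color $c_i$ different from $\sigma_a(v),\tau_a(v)$, every descendant of $u_i$ at odd distance from $v$ gets $c_i$, and every other descendant of $v$ gets color $\sigma_a(v)$. *)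

theory Defs
  imports "HOL-Probability.Probability"
begin

text \<open>A graph is given by a finite vertex set V and a symmetric edge relation E.
  Colorings are functions into nat; the colour set [k] is {0..<k}.
  Only values on V are relevant.\<close>

inductive kempe_reach :: "'v set \<Rightarrow> ('v \<Rightarrow> 'v \<Rightarrow> bool) \<Rightarrow> ('v \<Rightarrow> nat) \<Rightarrow> nat \<Rightarrow> 'v \<Rightarrow> 'v \<Rightarrow> bool"
  for V E \<sigma> c v where
  base: "v \<in> V \<Longrightarrow> kempe_reach V E \<sigma> c v v"
| step: "kempe_reach V E \<sigma> c v w \<Longrightarrow> u \<in> V \<Longrightarrow> E w u \<Longrightarrow> \<sigma> u \<in> {\<sigma> v, c}
          \<Longrightarrow> \<sigma> u \<noteq> \<sigma> w \<Longrightarrow> kempe_reach V E \<sigma> c v u"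

text \<open>S_sigma(v,c): vertices reachable from v by a path alternating between colours sigma(v) and c.\<close>
definition kempe :: "'v set \<Rightarrow> ('v \<Rightarrow> 'v \<Rightarrow> bool) \<Rightarrow> ('v \<Rightarrow> nat) \<Rightarrow> 'v \<Rightarrow> nat \<Rightarrow> 'v set" where
  "kempe V E \<sigma> v c = (if c = \<sigma> v then {} else {w. kempe_reach V E \<sigma> c v w})"

definition flip_set :: "('v \<Rightarrow> nat) \<Rightarrow> 'v set \<Rightarrow> nat \<Rightarrow> nat \<Rightarrow> ('v \<Rightarrow> nat)" where
  "flip_set \<sigma> S a c = (\<lambda>w. if w \<in> S then (if \<sigma> w = a then c else if \<sigma> w = c then a else \<sigma> w) else \<sigma> w)"

definition flip_step :: "'v set \<Rightarrow> ('v \<Rightarrow> 'v \<Rightarrow> bool) \<Rightarrow> nat \<Rightarrow> (nat \<Rightarrow> real) \<Rightarrow> ('v \<Rightarrow> nat) \<Rightarrow> ('v \<Rightarrow> nat) pmf" where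
  "flip_step V E k p \<sigma> =
     do { v \<leftarrow> pmf_of_set V;
          c \<leftarrow> pmf_of_set {0..<k};
          let S = kempe V E \<sigma> v c;
          b \<leftarrow> bernoulli_pmf (p (card S) / real (card S));
          return_pmf (if b then flip_set \<sigma> S (\<sigma> v) c else \<sigma>) }"

definition hamming :: "'v set \<Rightarrow> ('v \<Rightarrow> nat) \<Rightarrow> ('v \<Rightarrow> nat) \<Rightarrow> nat" where
  "hamming V \<sigma> \<tau> = card {w \<in> V. \<sigma> w \<noteq> \<tau> w}"

definition contracting_coupling :: "'v set \<Rightarrow> ('v \<Rightarrow> 'v \<Rightarrow> bool) \<Rightarrow> nat \<Rightarrow> (nat \<Rightarrow> real)
     \<Rightarrow> ('v \<Rightarrow> nat) \<Rightarrow> ('v \<Rightarrow> nat) \<Rightarrow> bool" where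
  "contracting_coupling V E k p \<sigma> \<tau> =
     (\<exists>\<mu> :: (('v \<Rightarrow> nat) \<times> ('v \<Rightarrow> nat)) pmf.
        map_pmf fst \<mu> = flip_step V E k p \<sigma> \<and>
        map_pmf snd \<mu> = flip_step V E k p \<tau> \<and>
        measure_pmf.expectation \<mu> (\<lambda>(x, y). real (hamming V x y) - 1) < 0)"

text \<open>G_1: u_i = (i,1), its children w^i_1 = (i,2), w^i_2 = (i,3), for 1 <= i <= d.
  G_a: the i-th path is (i,1) - (i,2) - ... - (i,a), with (i,1) = u_i adjacent to the root.\<close>

definition root :: "nat \<times> nat" where "root = (0, 0)"

definition V1 :: "nat \<Rightarrow> (nat \<times> nat) set" where
  "V1 d = {root} \<union> {(i, j). 1 \<le> i \<and> i \<le> d \<and> 1 \<le> j \<and> j \<le> 3}"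

definition E1_base :: "nat \<Rightarrow> nat \<times> nat \<Rightarrow> nat \<times> nat \<Rightarrow> bool" where
  "E1_base d x y = (\<exists>i. 1 \<le> i \<and> i \<le> d \<and>
      ((x = root \<and> y = (i, 1)) \<or> (x = (i, 1) \<and> (y = (i, 2) \<or> y = (i, 3)))))"

definition E1 :: "nat \<Rightarrow> nat \<times> nat \<Rightarrow> nat \<times> nat \<Rightarrow> bool" where
  "E1 d x y = (E1_base d x y \<or> E1_base d y x)"

definition Vpath :: "nat \<Rightarrow> nat \<Rightarrow> (nat \<times> nat) set" where
  "Vpath d a = {root} \<union> {(i, j). 1 \<le> i \<and> i \<le> d \<and> 1 \<le> j \<and> j \<le> a}"

definition Epath_base :: "nat \<Rightarrow> nat \<Rightarrow> nat \<times> nat \<Rightarrow> nat \<times> nat \<Rightarrow> bool" where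
  "Epath_base d a x y = (\<exists>i. 1 \<le> i \<and> i \<le> d \<and>
      ((x = root \<and> y = (i, 1)) \<or> (\<exists>j. 1 \<le> j \<and> j < a \<and> x = (i, j) \<and> y = (i, j + 1))))"

definition Epath :: "nat \<Rightarrow> nat \<Rightarrow> nat \<times> nat \<Rightarrow> nat \<times> nat \<Rightarrow> bool" where
  "Epath d a x y = (Epath_base d a x y \<or> Epath_base d a y x)"

text \<open>Coloring of G_1 with root colour r (= sigma_1(v) or tau_1(v)), base colour s = sigma_1(v)
  for the leaves, and colour c_j on u_{2j-1}, u_{2j}.\<close>
definition col1 :: "nat \<Rightarrow> nat \<Rightarrow> (nat \<Rightarrow> nat) \<Rightarrow> nat \<times> nat \<Rightarrow> nat" where
  "col1 r s c x = (if x = root then r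
                   else if snd x = 1 then c ((fst x + 1) div 2) else s)"

definition colpath :: "nat \<Rightarrow> nat \<Rightarrow> (nat \<Rightarrow> nat) \<Rightarrow> nat \<times> nat \<Rightarrow> nat" where
  "colpath r s c x = (if x = root then r
                      else if odd (snd x) then c (fst x) else s)"

text \<open>Admissible colour choices: a = sigma(v), b = tau(v) distinct colours in [k];
  c_1..c_n distinct colours in [k] different from a and b.\<close>
definition valid_colors :: "nat \<Rightarrow> nat \<Rightarrow> nat \<Rightarrow> nat \<Rightarrow> (nat \<Rightarrow> nat) \<Rightarrow> bool" where
  "valid_colors k n a b c = (a < k \<and> b < k \<and> a \<noteq> b \<and> inj_on c {1..n} \<and>
      (\<forall>j\<in>{1..n}. c j < k \<and> c j \<noteq> a \<and> c j \<noteq> b))"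

end

theory Submission
  imports Defs
begin

text \<open>Let h be a potential on colourings that is 1-Lipschitz for the Hamming distance and satisfies
  h \<sigma> = h \<tau> + 1. Under any coupling, E[d(\<sigma>', \<tau>')] is at least E[h \<sigma>'] - E[h \<tau>'],
  and one step of the flip dynamics moves the expectation of h by its drift, a linear form in
  the flip probabilities. So a contracting coupling forces the drift of h at \<sigma> to be smaller
  than at \<tau>. On G_2 a potential with one term per leg yields (2d - k) p_1 - d p_3 < 0; on G_1
  a potential with one term per pair of children sharing a colour yields
  (3d/2 - k) p_1 + 2d p_3 < 0. Twice the first plus the second is
  (11d/2 - 3k) p_1 < 0, impossible for k < 11d/6 as p_1 \<ge> 0.\<close>

section \<open>Drift of the flip dynamics\<close>

definition flip_drift :: "'v set \<Rightarrow> ('v \<Rightarrow> 'v \<Rightarrow> bool) \<Rightarrow> (nat \<Rightarrow> real) \<Rightarrow> (('v \<Rightarrow> nat) \<Rightarrow> real)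
    \<Rightarrow> ('v \<Rightarrow> nat) \<Rightarrow> 'v \<Rightarrow> nat \<Rightarrow> real" where
  "flip_drift V E p h \<sigma> w c = p (card (kempe V E \<sigma> w c)) / card (kempe V E \<sigma> w c) *
      (h (flip_set \<sigma> (kempe V E \<sigma> w c) (\<sigma> w) c) - h \<sigma>)"

definition total_drift :: "'v set \<Rightarrow> ('v \<Rightarrow> 'v \<Rightarrow> bool) \<Rightarrow> nat \<Rightarrow> (nat \<Rightarrow> real)
    \<Rightarrow> (('v \<Rightarrow> nat) \<Rightarrow> real) \<Rightarrow> ('v \<Rightarrow> nat) \<Rightarrow> real" where
  "total_drift V E k p h \<sigma> = (\<Sum>w\<in>V. \<Sum>c\<in>{0..<k}. flip_drift V E p h \<sigma> w c)"

lemma flip_probability_bounds: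
  assumes "0 \<le> p n" "p n \<le> (1::real)"
  shows "0 \<le> p n / real n" "p n / real n \<le> 1"
  using assms by (auto intro: divide_le_eq_1_pos[THEN iffD2] simp: divide_le_eq)

lemma expectation_flip_step:
  fixes h :: "('v \<Rightarrow> nat) \<Rightarrow> real"
  assumes "finite V" "V \<noteq> {}" "k > 0" "\<forall>\<alpha>. 0 \<le> p \<alpha> \<and> p \<alpha> \<le> 1"
  shows "measure_pmf.expectation (flip_step V E k p \<sigma>) h =
    h \<sigma> + total_drift V E k p h \<sigma> / (card V * k)"
proof -
  have bernoulli: "measure_pmf.expectation (bernoulli_pmf q \<bind> (\<lambda>b. return_pmf (if b then x else y))) h
      = h y + q * (h x - h y)" if "0 \<le> q" "q \<le> 1" for q x y
    using that by (simp add: map_pmf_def[symmetric] algebra_simps)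
  have "measure_pmf.expectation (flip_step V E k p \<sigma>) h =
      (\<Sum>w\<in>V. \<Sum>c\<in>{0..<k}. h \<sigma> + flip_drift V E p h \<sigma> w c) / (card V * k)"
    unfolding flip_step_def Let_def
    using assms flip_probability_bounds[of p]
    by (simp add: pmf_expectation_bind_pmf_of_set bernoulli flip_drift_def
        sum_divide_distrib[symmetric] sum_distrib_left field_simps)
  also have "\<dots> = h \<sigma> + total_drift V E k p h \<sigma> / (card V * k)"
    using assms by (simp add: total_drift_def sum.distrib add_divide_distrib card_gt_0_iff)
  finally show ?thesis .
qed

lemma finite_set_pmf_flip_step:
  assumes "finite V" "V \<noteq> {}" "k > 0"
  shows "finite (set_pmf (flip_step V E k p \<sigma>))"
proof (rule finite_subset)
  show "set_pmf (flip_step V E k p \<sigma>) \<subseteq>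
      insert \<sigma> ((\<lambda>(w, c). flip_set \<sigma> (kempe V E \<sigma> w c) (\<sigma> w) c) ` (V \<times> {0..<k}))"
    using assms by (auto simp: flip_step_def Let_def split: if_splits intro!: rev_image_eqI)
qed (use assms in simp)

lemma coupling_expectation_diff_le:
  fixes f :: "'a \<Rightarrow> real" and D :: "'a \<Rightarrow> 'a \<Rightarrow> real"
  assumes "map_pmf fst \<mu> = P" "map_pmf snd \<mu> = Q" "finite (set_pmf P)" "finite (set_pmf Q)"
    and "\<And>x y. f x - f y \<le> D x y + c"
  shows "measure_pmf.expectation P f - measure_pmf.expectation Q f
     \<le> measure_pmf.expectation \<mu> (\<lambda>(x, y). D x y) + c"
proof -
  have "set_pmf \<mu> \<subseteq> set_pmf P \<times> set_pmf Q"
    by (auto simp flip: assms(1,2) intro: rev_image_eqI)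
  then have int: "integrable (measure_pmf \<mu>) g" for g :: "_ \<Rightarrow> real"
    using assms(3,4) by (intro integrable_measure_pmf_finite) (auto dest: finite_subset)
  have "measure_pmf.expectation P f - measure_pmf.expectation Q f =
      measure_pmf.expectation \<mu> (\<lambda>z. f (fst z) - f (snd z))"
    by (simp flip: assms(1,2) add: int)
  also have "\<dots> \<le> measure_pmf.expectation \<mu> (\<lambda>z. D (fst z) (snd z) + c)"
    by (rule integral_mono) (auto intro: int simp: assms(5))
  also have "\<dots> = measure_pmf.expectation \<mu> (\<lambda>(x, y). D x y) + c"
    by (simp add: int case_prod_unfold)
  finally show ?thesis .
qed

lemma contracting_coupling_imp_drift_less:
  fixes h :: "('v \<Rightarrow> nat) \<Rightarrow> real"
  assumes "contracting_coupling V E k p \<sigma> \<tau>"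
    and "finite V" "V \<noteq> {}" "k > 0" "\<forall>\<alpha>. 0 \<le> p \<alpha> \<and> p \<alpha> \<le> 1"
    and "\<And>x y. h x - h y \<le> real (hamming V x y)"
    and "h \<sigma> - h \<tau> = 1"
  shows "total_drift V E k p h \<sigma> < total_drift V E k p h \<tau>"
proof -
  obtain \<mu> where \<mu>: "map_pmf fst \<mu> = flip_step V E k p \<sigma>" "map_pmf snd \<mu> = flip_step V E k p \<tau>"
    "measure_pmf.expectation \<mu> (\<lambda>(x, y). real (hamming V x y) - 1) < 0"
    using assms(1) unfolding contracting_coupling_def by blast
  have "measure_pmf.expectation (flip_step V E k p \<sigma>) h - measure_pmf.expectation (flip_step V E k p \<tau>) h
      \<le> measure_pmf.expectation \<mu> (\<lambda>(x, y). real (hamming V x y) - 1) + 1"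
    by (rule coupling_expectation_diff_le[OF \<mu>(1,2)])
      (simp_all add: finite_set_pmf_flip_step assms(2-4,6))
  then have "(total_drift V E k p h \<sigma> - total_drift V E k p h \<tau>) / (card V * k) < 0"
    using \<mu>(3) assms(7) by (simp add: expectation_flip_step[OF assms(2-5)] diff_divide_distrib)
  moreover have "real (card V * k) > 0"
    using assms(2-4) by (simp add: card_gt_0_iff)
  ultimately show ?thesis by (simp add: divide_less_0_iff)
qed

section \<open>Kempe components\<close>

lemma kempe_self: "kempe V E \<sigma> w (\<sigma> w) = {}"
  by (simp add: kempe_def)

lemma kempe_eq_singleton:
  assumes "w \<in> V" "c \<noteq> \<sigma> w" "\<And>y. y \<in> V \<Longrightarrow> E w y \<Longrightarrow> \<sigma> y \<noteq> c"
  shows "kempe V E \<sigma> w c = {w}"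
proof -
  have "u = w" if "kempe_reach V E \<sigma> c w u" for u
    using that by induction (use assms in auto)
  then show ?thesis
    using assms(1,2) by (auto simp: kempe_def intro: kempe_reach.base)
qed

lemma kempe_eqI:
  assumes "w \<in> S" "c \<noteq> \<sigma> w"
    and "\<And>x y. x \<in> S \<Longrightarrow> y \<in> V \<Longrightarrow> E x y \<Longrightarrow> \<sigma> y \<in> {\<sigma> w, c} \<Longrightarrow> \<sigma> y \<noteq> \<sigma> x \<Longrightarrow> y \<in> S"
    and "\<And>y. y \<in> S \<Longrightarrow> kempe_reach V E \<sigma> c w y"
  shows "kempe V E \<sigma> w c = S"
proof -
  have "u \<in> S" if "kempe_reach V E \<sigma> c w u" for u
    using that by induction (use assms(1,3) in auto)
  then show ?thesis
    using assms(2,4) unfolding kempe_def by auto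
qed

lemma kempe_reach_iff_rtranclp:
  "kempe_reach V E \<sigma> c v w \<longleftrightarrow>
     v \<in> V \<and> (\<lambda>x u. u \<in> V \<and> E x u \<and> \<sigma> u \<in> {\<sigma> v, c} \<and> \<sigma> u \<noteq> \<sigma> x)\<^sup>*\<^sup>* v w"
proof
  assume "kempe_reach V E \<sigma> c v w"
  then show "v \<in> V \<and> (\<lambda>x u. u \<in> V \<and> E x u \<and> \<sigma> u \<in> {\<sigma> v, c} \<and> \<sigma> u \<noteq> \<sigma> x)\<^sup>*\<^sup>* v w"
    by induction (auto intro: rtranclp.rtrancl_into_rtrancl)
next
  assume "v \<in> V \<and> (\<lambda>x u. u \<in> V \<and> E x u \<and> \<sigma> u \<in> {\<sigma> v, c} \<and> \<sigma> u \<noteq> \<sigma> x)\<^sup>*\<^sup>* v w"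
  then show "kempe_reach V E \<sigma> c v w"
    by (auto elim: rtranclp_induct intro: kempe_reach.intros)
qed

lemma kempe_eq_of_mem:
  assumes "symp E" and y: "y \<in> kempe V E \<sigma> w c"
    and pair: "{\<sigma> y, c'} = {\<sigma> w, c}" and "c' \<noteq> \<sigma> y"
  shows "kempe V E \<sigma> y c' = kempe V E \<sigma> w c"
proof -
  define R where "R = (\<lambda>x u. u \<in> V \<and> E x u \<and> \<sigma> u \<in> {\<sigma> w, c} \<and> \<sigma> u \<noteq> \<sigma> x)"
  have "c \<noteq> \<sigma> w" "w \<in> V" "R\<^sup>*\<^sup>* w y"
    using y by (auto simp: kempe_def kempe_reach_iff_rtranclp R_def split: if_splits)
  have reached: "x \<in> V \<and> \<sigma> x \<in> {\<sigma> w, c}" if "R\<^sup>*\<^sup>* w x" for x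
    using that by (induction rule: rtranclp_induct) (use \<open>w \<in> V\<close> in \<open>auto simp: R_def\<close>)
  have reverse: "R\<^sup>*\<^sup>* x w" if "R\<^sup>*\<^sup>* w x" for x
    using that
  proof (induction rule: rtranclp_induct)
    case (step x u)
    then have "R u x"
      using reached[of x] \<open>symp E\<close> by (auto simp: R_def dest: sympD)
    then show ?case using step.IH by (rule converse_rtranclp_into_rtranclp)
  qed simp
  have "R\<^sup>*\<^sup>* y x \<longleftrightarrow> R\<^sup>*\<^sup>* w x" for x
    using \<open>R\<^sup>*\<^sup>* w y\<close> reverse[OF \<open>R\<^sup>*\<^sup>* w y\<close>] by (meson rtranclp_trans)
  then have "kempe_reach V E \<sigma> c' y x \<longleftrightarrow> kempe_reach V E \<sigma> c w x" for x
    unfolding kempe_reach_iff_rtranclp pair R_def[symmetric]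
    using reached[OF \<open>R\<^sup>*\<^sup>* w y\<close>] \<open>w \<in> V\<close> by blast
  then show ?thesis
    using assms(4) \<open>c \<noteq> \<sigma> w\<close> unfolding kempe_def by auto
qed

lemma flip_set_singleton: "flip_set \<sigma> {w} (\<sigma> w) c = \<sigma>(w := c)"
  by (auto simp: flip_set_def)

lemma flip_drift_self: "flip_drift V E p h \<sigma> w (\<sigma> w) = 0"
  by (simp add: flip_drift_def kempe_self)

lemma flip_drift_singleton:
  "kempe V E \<sigma> w c = {w} \<Longrightarrow> flip_drift V E p h \<sigma> w c = p 1 * (h (\<sigma>(w := c)) - h \<sigma>)"
  by (simp add: flip_drift_def flip_set_singleton)

lemma flip_set_swap: "flip_set \<sigma> S a c = flip_set \<sigma> S c a"
  by (auto simp: flip_set_def)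

lemma flip_drift_eq_of_mem:
  assumes "symp E" "y \<in> kempe V E \<sigma> w c" "{\<sigma> y, c'} = {\<sigma> w, c}" "c' \<noteq> \<sigma> y"
  shows "flip_drift V E p h \<sigma> y c' = flip_drift V E p h \<sigma> w c"
proof -
  have "flip_set \<sigma> S (\<sigma> y) c' = flip_set \<sigma> S (\<sigma> w) c" for S
    using assms(3) by (auto simp: doubleton_eq_iff flip_set_swap)
  then show ?thesis
    unfolding flip_drift_def kempe_eq_of_mem[OF assms] by simp
qed

lemma sum_colours_two_support:
  fixes f :: "nat \<Rightarrow> real"
  assumes "a < k" "b < k" "a \<noteq> b" "\<And>c. c < k \<Longrightarrow> c \<noteq> a \<Longrightarrow> c \<noteq> b \<Longrightarrow> f c = 0"
  shows "(\<Sum>c\<in>{0..<k}. f c) = f a + f b"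
proof -
  have "(\<Sum>c\<in>{0..<k}. f c) = (\<Sum>c\<in>{0..<k} - {a, b}. f c) + (\<Sum>c\<in>{a, b}. f c)"
    by (rule sum.subset_diff) (use assms in auto)
  also have "(\<Sum>c\<in>{0..<k} - {a, b}. f c) = 0"
    by (rule sum.neutral) (use assms in auto)
  finally show ?thesis using assms(3) by simp
qed

lemma sum_colours_by_class:
  fixes f :: "nat \<Rightarrow> real"
  assumes "inj_on C I" "finite I" "\<And>i. i \<in> I \<Longrightarrow> C i < k \<and> C i \<noteq> a \<and> C i \<noteq> b"
    and "a < k" "b < k" "a \<noteq> b"
    and "f a = 0" "f b = \<gamma>" "\<And>i. i \<in> I \<Longrightarrow> f (C i) = \<alpha>"
    and "\<And>c. c < k \<Longrightarrow> c \<noteq> a \<Longrightarrow> c \<noteq> b \<Longrightarrow> c \<notin> C ` I \<Longrightarrow> f c = \<beta>"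
  shows "(\<Sum>c\<in>{0..<k}. f c) = real (card I) * \<alpha> + \<gamma> + (real k - 2 - real (card I)) * \<beta>"
proof -
  define R where "R = {0..<k} - {a, b} - C ` I"
  have ab: "{a, b} \<subseteq> {0..<k}" and CI: "C ` I \<subseteq> {0..<k} - {a, b}"
    using assms(3-5) by auto
  have card_ab: "card ({0..<k} - {a, b}) = k - 2"
    using ab assms(6) by (simp add: card_Diff_subset)
  have card_CI: "card (C ` I) = card I"
    using assms(1) by (simp add: card_image)
  have "card I \<le> k - 2"
    using card_mono[OF _ CI] card_ab card_CI by simp
  moreover have "2 \<le> k"
    using card_mono[OF _ ab] assms(6) by simp
  ultimately have card_R: "real (card R) = real k - 2 - real (card I)"
    unfolding R_def using CI card_ab card_CI assms(2)
    by (simp add: card_Diff_subset of_nat_diff)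
  have "(\<Sum>c\<in>{0..<k}. f c) = (\<Sum>c\<in>R. f c) + (\<Sum>c\<in>C ` I. f c) + (\<Sum>c\<in>{a, b}. f c)"
    unfolding R_def sum.subset_diff[OF ab finite_atLeastLessThan]
      sum.subset_diff[OF CI finite_Diff[OF finite_atLeastLessThan]] ..
  also have "(\<Sum>c\<in>C ` I. f c) = real (card I) * \<alpha>"
    using assms(9) by (simp add: sum.reindex[OF assms(1)])
  also have "(\<Sum>c\<in>R. f c) = real (card R) * \<beta>"
    using assms(10) by (simp add: R_def)
  finally show ?thesis
    using assms(6-8) card_R by (simp add: algebra_simps)
qed

lemma sum_indicator_inj_le_1:
  assumes "inj_on C I" "finite I" "\<And>i. i \<in> I \<Longrightarrow> 0 \<le> g i \<and> g i \<le> 1"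
  shows "(\<Sum>i\<in>I. of_bool (z = C i) * g i) \<le> (1::real)"
proof (cases "z \<in> C ` I")
  case True
  then obtain i0 where i0: "i0 \<in> I" "z = C i0" by blast
  have "(\<Sum>i\<in>I. of_bool (z = C i) * g i) = (\<Sum>i\<in>{i0}. of_bool (z = C i) * g i)"
    using assms(1,2) i0 by (intro sum.mono_neutral_right) (auto dest: inj_onD)
  then show ?thesis using assms(3)[OF i0(1)] i0(2) by simp
next
  case False
  then have "(\<Sum>i\<in>I. of_bool (z = C i) * g i) = 0" by (intro sum.neutral) auto
  then show ?thesis by simp
qed

lemma sum_pairs:
  fixes f :: "nat \<Rightarrow> 'a::comm_monoid_add"
  shows "(\<Sum>i\<in>{1..2 * m}. f i) = (\<Sum>j\<in>{1..m}. f (2 * j - 1) + f (2 * j))"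
proof (induction m)
  case (Suc m)
  have "{1..2 * Suc m} = insert (2 * m + 2) (insert (2 * m + 1) {1..2 * m})"
    by auto
  then show ?case
    using Suc by (simp add: sum.cl_ivl_Suc ac_simps)
qed simp

lemma hamming_eq_sum:
  assumes "finite V"
  shows "real (hamming V x y) = (\<Sum>w\<in>V. of_bool (x w \<noteq> y w))"
  using assms by (simp add: hamming_def of_bool_def sum.If_cases Int_def)

lemma Vpath_eq: "Vpath d a = insert root ({1..d} \<times> {1..a})"
  by (auto simp: Vpath_def)

lemma V1_eq_Vpath: "V1 d = Vpath d 3"
  by (simp add: V1_def Vpath_def)

lemma finite_Vpath: "finite (Vpath d a)"
  by (simp add: Vpath_eq)

lemma root_in_Vpath [simp]: "root \<in> Vpath d a"
  by (simp add: Vpath_def)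

lemma mem_Vpath [simp]:
  "(i, j) \<in> Vpath d a \<longleftrightarrow> (i, j) = root \<or> (1 \<le> i \<and> i \<le> d \<and> 1 \<le> j \<and> j \<le> a)"
  by (auto simp: Vpath_def)

lemma root_neq_branch [simp]: "0 < i \<Longrightarrow> (i, j) \<noteq> root" "0 < i \<Longrightarrow> root \<noteq> (i, j)"
  by (auto simp: root_def)

lemma sum_Vpath: "(\<Sum>w\<in>Vpath d a. f w) = f root + (\<Sum>i\<in>{1..d}. \<Sum>j\<in>{1..a}. f (i, j))"
proof -
  have "root \<notin> {1..d} \<times> {1..a}"
    by (auto simp: root_def)
  then show ?thesis
    by (simp add: Vpath_eq sum.cartesian_product)
qed

lemma hamming_Vpath:
  "real (hamming (Vpath d a) x y) =
     of_bool (x root \<noteq> y root) + (\<Sum>i\<in>{1..d}. \<Sum>j\<in>{1..a}. of_bool (x (i, j) \<noteq> y (i, j)))"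
  by (simp add: hamming_eq_sum[OF finite_Vpath] sum_Vpath)

lemma sum_1_2: "(\<Sum>j\<in>{1..2::nat}. g j) = g 1 + g 2"
  by (simp add: numeral_2_eq_2)

lemma sum_1_3: "(\<Sum>j\<in>{1..3::nat}. g j) = g 1 + g 2 + g 3"
  by (simp add: numeral_3_eq_3 numeral_2_eq_2)

lemma total_drift_Vpath:
  "total_drift (Vpath d a) E k p h x =
     (\<Sum>c\<in>{0..<k}. flip_drift (Vpath d a) E p h x root c) +
     (\<Sum>i\<in>{1..d}. \<Sum>j\<in>{1..a}. \<Sum>c\<in>{0..<k}. flip_drift (Vpath d a) E p h x (i, j) c)"
  by (simp add: total_drift_def sum_Vpath)

lemma colpath_root [simp]: "colpath r s C root = r"
  by (simp add: colpath_def)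

lemma colpath_branch [simp]: "0 < i \<Longrightarrow> colpath r s C (i, j) = (if odd j then C i else s)"
  by (simp add: colpath_def)

lemma symp_Epath: "symp (Epath d a)"
  by (auto simp: symp_def Epath_def)

lemma Epath_root_iff: "Epath d a root y \<longleftrightarrow> (\<exists>i. 1 \<le> i \<and> i \<le> d \<and> y = (i, 1))"
  unfolding Epath_def Epath_base_def root_def by auto

lemma Epath_first_iff:
  "0 < i \<Longrightarrow> i \<le> d \<Longrightarrow> Epath d a (i, 1) y \<longleftrightarrow> y = root \<or> (2 \<le> a \<and> y = (i, 2))"
  unfolding Epath_def Epath_base_def root_def by auto

lemma Epath_last_iff:
  "0 < i \<Longrightarrow> i \<le> d \<Longrightarrow> 2 \<le> a \<Longrightarrow> Epath d a (i, a) y \<longleftrightarrow> y = (i, a - 1)"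
  unfolding Epath_def Epath_base_def root_def by auto

lemma symp_E1: "symp (E1 d)"
  by (auto simp: symp_def E1_def)

lemma E1_root_iff: "E1 d root y \<longleftrightarrow> (\<exists>i. 1 \<le> i \<and> i \<le> d \<and> y = (i, 1))"
  unfolding E1_def E1_base_def root_def by auto

lemma E1_first_iff:
  "0 < i \<Longrightarrow> i \<le> d \<Longrightarrow> E1 d (i, 1) y \<longleftrightarrow> y = root \<or> y = (i, 2) \<or> y = (i, 3)"
  unfolding E1_def E1_base_def root_def by auto

lemma E1_leaf_iff:
  "0 < i \<Longrightarrow> i \<le> d \<Longrightarrow> t = 2 \<or> t = 3 \<Longrightarrow> E1 d (i, t) y \<longleftrightarrow> y = (i, 1)"
  unfolding E1_def E1_base_def root_def by auto

lemma col1_root [simp]: "col1 r s C root = r"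
  by (simp add: col1_def)

section \<open>The pair on G_2\<close>

locale pair_G2 =
  fixes d k A B :: nat and C :: "nat \<Rightarrow> nat"
  assumes colours: "valid_colors k d A B C"
begin

abbreviation "V \<equiv> Vpath d 2"
abbreviation "E \<equiv> Epath d 2"
abbreviation "\<sigma> \<equiv> colpath A A C"
abbreviation "\<tau> \<equiv> colpath B A C"

text \<open>Simplified because the simplifier normalises the vertex (i, 1) to (i, Suc 0).\<close>
lemmas E_iff = Epath_root_iff Epath_first_iff[of _ d 2, simplified] Epath_last_iff[of _ d 2, simplified]

lemma root_colours [simp]: "A < k" "B < k" "A \<noteq> B" "B \<noteq> A"
  using colours by (auto simp: valid_colors_def)

lemma leg_colour [simp]:
  assumes "1 \<le> i" "i \<le> d"
  shows "C i < k" "C i \<noteq> A" "C i \<noteq> B" "A \<noteq> C i" "B \<noteq> C i"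
  using colours assms by (auto simp: valid_colors_def)

lemma root_colours_not_leg [simp]: "A \<notin> C ` {1..d}" "B \<notin> C ` {1..d}"
  by auto

lemma leg_colour_eq_iff:
  "1 \<le> i \<Longrightarrow> i \<le> d \<Longrightarrow> 1 \<le> j \<Longrightarrow> j \<le> d \<Longrightarrow> C i = C j \<longleftrightarrow> i = j"
  using colours by (auto simp: valid_colors_def dest: inj_onD)

definition leg_potential :: "(nat \<times> nat \<Rightarrow> nat) \<Rightarrow> nat \<Rightarrow> real" where
  "leg_potential x i = of_bool (x (i, 1) = B) - of_bool (x (i, 2) = C i)
     + of_bool (x root = C i) * of_bool (x (i, 2) = C i)"

definition potential :: "(nat \<times> nat \<Rightarrow> nat) \<Rightarrow> real" where
  "potential x = of_bool (x root = A) + (\<Sum>i\<in>{1..d}. leg_potential x i)"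

lemma potential_eq_leg:
  assumes "1 \<le> i" "i \<le> d"
    and "\<And>j. 1 \<le> j \<Longrightarrow> j \<le> d \<Longrightarrow> j \<noteq> i \<Longrightarrow> x (j, 1) \<noteq> B \<and> x (j, 2) \<noteq> C j"
  shows "potential x = of_bool (x root = A) + leg_potential x i"
proof -
  have "(\<Sum>j\<in>{1..d}. leg_potential x j) = (\<Sum>j\<in>{i}. leg_potential x j)"
    using assms by (intro sum.mono_neutral_right) (auto simp: leg_potential_def)
  then show ?thesis by (simp add: potential_def)
qed

lemma potential_eq_root:
  assumes "\<And>j. 1 \<le> j \<Longrightarrow> j \<le> d \<Longrightarrow> x (j, 1) \<noteq> B \<and> x (j, 2) \<noteq> C j"
  shows "potential x = of_bool (x root = A)"
  using assms by (simp add: potential_def leg_potential_def)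

lemma potential_sigma: "potential \<sigma> = 1"
  by (subst potential_eq_root) auto

lemma potential_tau: "potential \<tau> = 0"
  by (subst potential_eq_root) auto

definition root_potential :: "(nat \<times> nat \<Rightarrow> nat) \<Rightarrow> real" where
  "root_potential x = of_bool (x root = A) + (\<Sum>i\<in>{1..d}. of_bool (x root = C i) * of_bool (x (i, 2) = C i))"

text \<open>At most one summand of the root potential is nonzero, as the colours C i are distinct and
  differ from A. So a change at the root moves the potential by at most one.\<close>
lemma root_potential_bounds: "0 \<le> root_potential x" "root_potential x \<le> 1"
proof -
  show "0 \<le> root_potential x"
    unfolding root_potential_def by (intro add_nonneg_nonneg sum_nonneg) auto
  have "(\<Sum>i\<in>{1..d}. of_bool (x root = C i) * of_bool (x (i, 2) = C i)) \<le> (1::real)"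
    using colours by (intro sum_indicator_inj_le_1) (auto simp: valid_colors_def)
  moreover have "(\<Sum>i\<in>{1..d}. of_bool (x root = C i) * of_bool (x (i, 2) = C i)) = (0::real)"
    if "x root = A"
    using that by (intro sum.neutral) auto
  ultimately show "root_potential x \<le> 1"
    unfolding root_potential_def by (cases "x root = A") auto
qed

lemma potential_eq_root_potential:
  "potential x = root_potential x + (\<Sum>i\<in>{1..d}. of_bool (x (i, 1) = B) - of_bool (x (i, 2) = C i))"
  unfolding potential_def root_potential_def add.assoc sum.distrib[symmetric]
  by (intro arg_cong2[where f = "(+)"] refl sum.cong) (simp add: leg_potential_def)

lemma potential_Lipschitz: "potential x - potential y \<le> real (hamming V x y)"
proof (cases "x root = y root")
  case True
  have "potential x - potential y = (\<Sum>i\<in>{1..d}. leg_potential x i - leg_potential y i)"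
    using True by (simp add: potential_def sum_subtractf)
  also have "\<dots> \<le> (\<Sum>i\<in>{1..d}. of_bool (x (i, 1) \<noteq> y (i, 1)) + of_bool (x (i, 2) \<noteq> y (i, 2)))"
    using True by (intro sum_mono) (auto simp: leg_potential_def)
  also have "\<dots> \<le> real (hamming V x y)"
    unfolding hamming_Vpath sum_1_2 by simp
  finally show ?thesis .
next
  case False
  have "potential x - potential y \<le> 1 + (\<Sum>i\<in>{1..d}.
      (of_bool (x (i, 1) = B) - of_bool (x (i, 2) = C i)) - (of_bool (y (i, 1) = B) - of_bool (y (i, 2) = C i)))"
    using root_potential_bounds[of x] root_potential_bounds[of y]
    unfolding potential_eq_root_potential sum_subtractf by linarith
  also have "\<dots> \<le> 1 + (\<Sum>i\<in>{1..d}. of_bool (x (i, 1) \<noteq> y (i, 1)) + of_bool (x (i, 2) \<noteq> y (i, 2)))"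
    by (intro add_left_mono sum_mono) auto
  also have "\<dots> = real (hamming V x y)"
    using False unfolding hamming_Vpath sum_1_2 by simp
  finally show ?thesis .
qed

lemma kempe_sigma_root_leg:
  assumes i: "1 \<le> i" "i \<le> d"
  shows "kempe V E \<sigma> root (C i) = {root, (i, 1), (i, 2)}"
proof (rule kempe_eqI)
  fix x y assume "x \<in> {root, (i, 1), (i, 2)}" "y \<in> V" "E x y" "\<sigma> y \<in> {\<sigma> root, C i}"
  then show "y \<in> {root, (i, 1), (i, 2)}"
    using i by (auto simp: E_iff leg_colour_eq_iff)
next
  have r0: "kempe_reach V E \<sigma> (C i) root root"
    by (rule kempe_reach.base) simp
  have r1: "kempe_reach V E \<sigma> (C i) root (i, 1)"
    by (rule kempe_reach.step[OF r0]) (use i in \<open>auto simp: E_iff\<close>)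
  have r2: "kempe_reach V E \<sigma> (C i) root (i, 2)"
    by (rule kempe_reach.step[OF r1]) (use i in \<open>auto simp: E_iff\<close>)
  fix y assume "y \<in> {root, (i, 1), (i, 2)}"
  then show "kempe_reach V E \<sigma> (C i) root y"
    using r0 r1 r2 by blast
qed (use i in auto)

lemma kempe_tau_root_leg:
  assumes i: "1 \<le> i" "i \<le> d"
  shows "kempe V E \<tau> root (C i) = {root, (i, 1)}"
proof (rule kempe_eqI)
  fix x y assume "x \<in> {root, (i, 1)}" "y \<in> V" "E x y" "\<tau> y \<in> {\<tau> root, C i}"
  then show "y \<in> {root, (i, 1)}"
    using i by (auto simp: E_iff leg_colour_eq_iff)
next
  have r0: "kempe_reach V E \<tau> (C i) root root"
    by (rule kempe_reach.base) simp
  have r1: "kempe_reach V E \<tau> (C i) root (i, 1)"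
    by (rule kempe_reach.step[OF r0]) (use i in \<open>auto simp: E_iff\<close>)
  fix y assume "y \<in> {root, (i, 1)}"
  then show "kempe_reach V E \<tau> (C i) root y"
    using r0 r1 by blast
qed (use i in auto)

lemma kempe_tau_leg:
  assumes i: "1 \<le> i" "i \<le> d"
  shows "kempe V E \<tau> (i, 1) A = {(i, 1), (i, 2)}"
proof (rule kempe_eqI)
  fix x y assume "x \<in> {(i, 1), (i, 2)}" "y \<in> V" "E x y" "\<tau> y \<in> {\<tau> (i, 1), A}"
  then show "y \<in> {(i, 1), (i, 2)}"
    using i by (auto simp: E_iff)
next
  have r0: "kempe_reach V E \<tau> A (i, 1) (i, 1)"
    by (rule kempe_reach.base) (use i in simp)
  have r1: "kempe_reach V E \<tau> A (i, 1) (i, 2)"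
    by (rule kempe_reach.step[OF r0]) (use i in \<open>auto simp: E_iff\<close>)
  fix y :: "nat \<times> nat" assume "y \<in> {(i, 1), (i, 2)}"
  then show "kempe_reach V E \<tau> A (i, 1) y"
    using r0 r1 by blast
qed (use i in auto)

context
  fixes p :: "nat \<Rightarrow> real"
begin

abbreviation "drift \<equiv> flip_drift V E p potential"

lemma drift_sigma_root_leg:
  assumes i: "1 \<le> i" "i \<le> d"
  shows "drift \<sigma> root (C i) = - p 3 / 3"
proof -
  have "potential (flip_set \<sigma> {root, (i, 1), (i, 2)} A (C i)) = 0"
    using i by (subst potential_eq_leg[OF i]) (auto simp: flip_set_def leg_potential_def)
  then show ?thesis
    unfolding flip_drift_def kempe_sigma_root_leg[OF i] using i by (simp add: potential_sigma numeral_3_eq_3)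
qed

lemma drift_sigma_root_other:
  assumes "c \<noteq> A" "c \<notin> C ` {1..d}"
  shows "drift \<sigma> root c = - p 1"
proof -
  have "kempe V E \<sigma> root c = {root}"
    by (rule kempe_eq_singleton) (use assms in \<open>auto simp: E_iff\<close>)
  moreover have "potential (\<sigma>(root := c)) = 0"
    using assms by (subst potential_eq_root) auto
  ultimately show ?thesis
    by (simp add: flip_drift_singleton potential_sigma)
qed

lemma drift_sigma_first_other:
  assumes i: "1 \<le> i" "i \<le> d" and c: "c \<noteq> A" "c \<noteq> C i"
  shows "drift \<sigma> (i, 1) c = p 1 * of_bool (c = B)"
proof -
  have "kempe V E \<sigma> (i, 1) c = {(i, 1)}"
    by (rule kempe_eq_singleton) (use i c in \<open>auto simp: E_iff\<close>)
  moreover have "potential (\<sigma>((i, 1) := c)) = 1 + of_bool (c = B)"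
    using i c by (subst potential_eq_leg[OF i]) (auto simp: leg_potential_def)
  ultimately show ?thesis
    using i by (simp add: flip_drift_singleton potential_sigma)
qed

lemma drift_sigma_second_other:
  assumes i: "1 \<le> i" "i \<le> d" and c: "c \<noteq> A" "c \<noteq> C i"
  shows "drift \<sigma> (i, 2) c = 0"
proof -
  have "kempe V E \<sigma> (i, 2) c = {(i, 2)}"
    by (rule kempe_eq_singleton) (use i c in \<open>auto simp: E_iff\<close>)
  moreover have "potential (\<sigma>((i, 2) := c)) = 1"
    using i c by (subst potential_eq_leg[OF i]) (auto simp: leg_potential_def)
  ultimately show ?thesis
    by (simp add: flip_drift_singleton potential_sigma)
qed

lemma drift_sigma_leg_components:
  assumes i: "1 \<le> i" "i \<le> d"
  shows "drift \<sigma> (i, 1) A = - p 3 / 3" "drift \<sigma> (i, 2) (C i) = - p 3 / 3"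
proof -
  have "(i, 1) \<in> kempe V E \<sigma> root (C i)" "(i, 2) \<in> kempe V E \<sigma> root (C i)"
    using kempe_sigma_root_leg[OF i] by auto
  from this[THEN flip_drift_eq_of_mem[OF symp_Epath]] show
    "drift \<sigma> (i, 1) A = - p 3 / 3" "drift \<sigma> (i, 2) (C i) = - p 3 / 3"
    using i drift_sigma_root_leg[OF i] by (auto simp: insert_commute)
qed

lemma drift_sigma_at_root:
  "(\<Sum>c\<in>{0..<k}. drift \<sigma> root c) = real d * (- p 3 / 3) - p 1 + (real k - 2 - real d) * (- p 1)"
proof -
  have "(\<Sum>c\<in>{0..<k}. drift \<sigma> root c) =
      real (card {1..d}) * (- p 3 / 3) + (- p 1) + (real k - 2 - real (card {1..d})) * (- p 1)"
    using colours
    by (intro sum_colours_by_class[where C = C and a = A and b = B])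
      (auto simp: valid_colors_def flip_drift_self[of V E p potential \<sigma> root, simplified]
        drift_sigma_root_leg drift_sigma_root_other drift_sigma_root_other[OF root_colours(4) root_colours_not_leg(2)])
  then show ?thesis by simp
qed

lemma drift_sigma_on_leg:
  assumes i: "1 \<le> i" "i \<le> d"
  shows "(\<Sum>j\<in>{1..2}. \<Sum>c\<in>{0..<k}. drift \<sigma> (i, j) c) = p 1 - 2 * p 3 / 3"
proof -
  have self: "drift \<sigma> (i, 1) (C i) = 0" "drift \<sigma> (i, 2) A = 0"
    using i flip_drift_self[of V E p potential \<sigma> "(i, 1)"] flip_drift_self[of V E p potential \<sigma> "(i, 2)"]
    by simp_all
  have "(\<Sum>c\<in>{0..<k}. drift \<sigma> (i, 1) c) = drift \<sigma> (i, 1) A + drift \<sigma> (i, 1) B"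
  proof (rule sum_colours_two_support)
    show "drift \<sigma> (i, 1) c = 0" if "c < k" "c \<noteq> A" "c \<noteq> B" for c
      using that self drift_sigma_first_other[OF i, of c] by (cases "c = C i") auto
  qed simp_all
  moreover have "(\<Sum>c\<in>{0..<k}. drift \<sigma> (i, 2) c) = drift \<sigma> (i, 2) (C i) + drift \<sigma> (i, 2) A"
    using i drift_sigma_second_other[OF i] by (intro sum_colours_two_support) auto
  ultimately show ?thesis
    unfolding sum_1_2 using i self drift_sigma_leg_components[OF i] drift_sigma_first_other[OF i, of B]
    by simp
qed

lemma total_drift_sigma: "total_drift V E k p potential \<sigma> = (2 * real d - real k + 1) * p 1 - real d * p 3"
proof -
  have "(\<Sum>i\<in>{1..d}. \<Sum>j\<in>{1..2}. \<Sum>c\<in>{0..<k}. drift \<sigma> (i, j) c) = (\<Sum>i\<in>{1..d}. p 1 - 2 * p 3 / 3)"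
    by (rule sum.cong[OF refl], rule drift_sigma_on_leg) auto
  then show ?thesis
    by (simp add: total_drift_Vpath drift_sigma_at_root algebra_simps)
qed

lemma drift_tau_root_leg:
  assumes i: "1 \<le> i" "i \<le> d"
  shows "drift \<tau> root (C i) = p 2 / 2"
proof -
  have "potential (flip_set \<tau> {root, (i, 1)} B (C i)) = 1"
    using i by (subst potential_eq_leg[OF i]) (auto simp: flip_set_def leg_potential_def)
  then show ?thesis
    unfolding flip_drift_def kempe_tau_root_leg[OF i] using i by (simp add: potential_tau numeral_2_eq_2)
qed

lemma drift_tau_root_other:
  assumes "c \<noteq> B" "c \<notin> C ` {1..d}"
  shows "drift \<tau> root c = p 1 * of_bool (c = A)"
proof -
  have "kempe V E \<tau> root c = {root}"
    by (rule kempe_eq_singleton) (use assms in \<open>auto simp: E_iff\<close>)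
  moreover have "potential (\<tau>(root := c)) = of_bool (c = A)"
    by (subst potential_eq_root) auto
  ultimately show ?thesis
    by (simp add: flip_drift_singleton potential_tau)
qed

lemma drift_tau_leg:
  assumes i: "1 \<le> i" "i \<le> d"
  shows "drift \<tau> (i, 1) A = - p 2 / 2"
proof -
  have "potential (flip_set \<tau> {(i, 1), (i, 2)} (C i) A) = -1"
    using i by (subst potential_eq_leg[OF i]) (auto simp: flip_set_def leg_potential_def)
  then show ?thesis
    unfolding flip_drift_def kempe_tau_leg[OF i] using i by (simp add: potential_tau numeral_2_eq_2)
qed

lemma drift_tau_first_other:
  assumes i: "1 \<le> i" "i \<le> d" and c: "c \<noteq> A" "c \<noteq> B" "c \<noteq> C i"
  shows "drift \<tau> (i, 1) c = 0"
proof -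
  have "kempe V E \<tau> (i, 1) c = {(i, 1)}"
    by (rule kempe_eq_singleton) (use i c in \<open>auto simp: E_iff\<close>)
  moreover have "potential (\<tau>((i, 1) := c)) = 0"
    using i c by (subst potential_eq_leg[OF i]) (auto simp: leg_potential_def)
  ultimately show ?thesis
    by (simp add: flip_drift_singleton potential_tau)
qed

lemma drift_tau_second_other:
  assumes i: "1 \<le> i" "i \<le> d" and c: "c \<noteq> A" "c \<noteq> C i"
  shows "drift \<tau> (i, 2) c = 0"
proof -
  have "kempe V E \<tau> (i, 2) c = {(i, 2)}"
    by (rule kempe_eq_singleton) (use i c in \<open>auto simp: E_iff\<close>)
  moreover have "potential (\<tau>((i, 2) := c)) = 0"
    using i c by (subst potential_eq_leg[OF i]) (auto simp: leg_potential_def)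
  ultimately show ?thesis
    by (simp add: flip_drift_singleton potential_tau)
qed

lemma drift_tau_leg_components:
  assumes i: "1 \<le> i" "i \<le> d"
  shows "drift \<tau> (i, 1) B = p 2 / 2" "drift \<tau> (i, 2) (C i) = - p 2 / 2"
proof -
  have "(i, 1) \<in> kempe V E \<tau> root (C i)" "(i, 2) \<in> kempe V E \<tau> (i, 1) A"
    using kempe_tau_root_leg[OF i] kempe_tau_leg[OF i] by auto
  from this[THEN flip_drift_eq_of_mem[OF symp_Epath]] show
    "drift \<tau> (i, 1) B = p 2 / 2" "drift \<tau> (i, 2) (C i) = - p 2 / 2"
    using i drift_tau_root_leg[OF i] drift_tau_leg[OF i] by (auto simp: insert_commute)
qed

lemma drift_tau_at_root: "(\<Sum>c\<in>{0..<k}. drift \<tau> root c) = real d * (p 2 / 2) + p 1"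
proof -
  have "(\<Sum>c\<in>{0..<k}. drift \<tau> root c) =
      real (card {1..d}) * (p 2 / 2) + p 1 + (real k - 2 - real (card {1..d})) * 0"
    using colours
    by (intro sum_colours_by_class[where C = C and a = B and b = A])
      (auto simp: valid_colors_def flip_drift_self[of V E p potential \<tau> root, simplified]
        drift_tau_root_leg drift_tau_root_other drift_tau_root_other[OF root_colours(3) root_colours_not_leg(1)])
  then show ?thesis by simp
qed

lemma drift_tau_on_leg:
  assumes i: "1 \<le> i" "i \<le> d"
  shows "(\<Sum>j\<in>{1..2}. \<Sum>c\<in>{0..<k}. drift \<tau> (i, j) c) = - p 2 / 2"
proof -
  have self: "drift \<tau> (i, 1) (C i) = 0" "drift \<tau> (i, 2) A = 0"
    using i flip_drift_self[of V E p potential \<tau> "(i, 1)"] flip_drift_self[of V E p potential \<tau> "(i, 2)"]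
    by simp_all
  have "(\<Sum>c\<in>{0..<k}. drift \<tau> (i, 1) c) = drift \<tau> (i, 1) A + drift \<tau> (i, 1) B"
  proof (rule sum_colours_two_support)
    show "drift \<tau> (i, 1) c = 0" if "c < k" "c \<noteq> A" "c \<noteq> B" for c
      using that self drift_tau_first_other[OF i, of c] by (cases "c = C i") auto
  qed simp_all
  moreover have "(\<Sum>c\<in>{0..<k}. drift \<tau> (i, 2) c) = drift \<tau> (i, 2) (C i) + drift \<tau> (i, 2) A"
    using i drift_tau_second_other[OF i] by (intro sum_colours_two_support) auto
  ultimately show ?thesis
    unfolding sum_1_2 using self drift_tau_leg[OF i] drift_tau_leg_components[OF i]
    by simp
qed

lemma total_drift_tau: "total_drift V E k p potential \<tau> = p 1"
proof -
  have "(\<Sum>i\<in>{1..d}. \<Sum>j\<in>{1..2}. \<Sum>c\<in>{0..<k}. drift \<tau> (i, j) c) = (\<Sum>i\<in>{1..d}. - p 2 / 2)"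
    by (rule sum.cong[OF refl], rule drift_tau_on_leg) auto
  then show ?thesis
    by (simp add: total_drift_Vpath drift_tau_at_root)
qed

end

lemma contracting_coupling_imp_bound:
  assumes "contracting_coupling V E k p \<sigma> \<tau>" "\<forall>\<alpha>. 0 \<le> p \<alpha> \<and> p \<alpha> \<le> 1"
  shows "(2 * real d - real k) * p 1 - real d * p 3 < 0"
proof -
  have "total_drift V E k p potential \<sigma> < total_drift V E k p potential \<tau>"
  proof (rule contracting_coupling_imp_drift_less[OF assms(1) finite_Vpath _ _ assms(2) potential_Lipschitz])
    show "V \<noteq> {}" "k > 0"
      using root_in_Vpath root_colours(1) by (blast, linarith)
  qed (simp add: potential_sigma potential_tau)
  then show ?thesis
    by (simp add: total_drift_sigma total_drift_tau algebra_simps)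
qed

end

section \<open>The pair on G_1\<close>

text \<open>The children u_(2j-1) and u_(2j) share the colour c_j; block i is the index j of
  the pair containing u_i and partner i the other member of that pair.\<close>
definition block :: "nat \<Rightarrow> nat" where
  "block i = (i + 1) div 2"

definition partner :: "nat \<Rightarrow> nat" where
  "partner i = (if odd i then i + 1 else i - 1)"

lemma block_bounds: "even d \<Longrightarrow> 1 \<le> i \<Longrightarrow> i \<le> d \<Longrightarrow> 1 \<le> block i \<and> block i \<le> d div 2"
  unfolding block_def by (auto elim!: evenE)

lemma partner_bounds: "even d \<Longrightarrow> 1 \<le> i \<Longrightarrow> i \<le> d \<Longrightarrow> 1 \<le> partner i \<and> partner i \<le> d"
  unfolding partner_def by (cases "odd i"; simp; presburger)

lemma partner_neq: "1 \<le> i \<Longrightarrow> partner i \<noteq> i"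
  unfolding partner_def by (cases "odd i"; simp; presburger)

lemma block_partner: "1 \<le> i \<Longrightarrow> block (partner i) = block i"
  unfolding partner_def block_def by (cases "odd i"; simp; presburger)

lemma block_eq_iff: "1 \<le> a \<Longrightarrow> 1 \<le> i \<Longrightarrow> block a = block i \<longleftrightarrow> a = i \<or> a = partner i"
  unfolding partner_def block_def by (cases "odd i"; simp; presburger)

lemma block_odd: "1 \<le> j \<Longrightarrow> block (2 * j - 1) = j"
  unfolding block_def by presburger

lemma block_even: "block (2 * j) = j"
  unfolding block_def by presburger

lemma pair_of_block:
  "1 \<le> i \<Longrightarrow> (2 * block i - 1 = i \<and> 2 * block i = partner i) \<or> (2 * block i - 1 = partner i \<and> 2 * block i = i)"
  unfolding partner_def block_def by (cases "odd i"; simp; presburger)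

lemma col1_branch [simp]: "0 < i \<Longrightarrow> col1 r s C (i, t) = (if t = 1 then C (block i) else s)"
  unfolding col1_def block_def by simp

lemma abs_minus_two_plus_step_diff_le:
  fixes m n :: nat and e :: real
  assumes "0 \<le> e" "e \<le> 1"
  shows "(\<bar>real m - 2\<bar> + e * of_bool (2 \<le> m)) - (\<bar>real n - 2\<bar> + e * of_bool (2 \<le> n)) \<le> \<bar>real m - real n\<bar>"
  using assms by (cases "2 \<le> m"; cases "2 \<le> n") auto

locale pair_G1 =
  fixes d k A B :: nat and C :: "nat \<Rightarrow> nat"
  assumes even_d: "even d" and colours: "valid_colors k (d div 2) A B C"
begin

abbreviation "V \<equiv> V1 d"
abbreviation "E \<equiv> E1 d"
abbreviation "\<sigma> \<equiv> col1 A A C"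
abbreviation "\<tau> \<equiv> col1 B A C"

lemma V_eq: "V = Vpath d 3"
  by (rule V1_eq_Vpath)

lemmas E_iff = E1_root_iff E1_first_iff[simplified] E1_leaf_iff

lemma total_drift_V:
  "total_drift V E k p h x =
     (\<Sum>c\<in>{0..<k}. flip_drift V E p h x root c) +
     (\<Sum>i\<in>{1..d}. \<Sum>t\<in>{1..3}. \<Sum>c\<in>{0..<k}. flip_drift V E p h x (i, t) c)"
  unfolding V_eq by (rule total_drift_Vpath)

lemma root_colours [simp]: "A < k" "B < k" "A \<noteq> B" "B \<noteq> A"
  using colours by (auto simp: valid_colors_def)

lemma block_colour [simp]:
  assumes "1 \<le> i" "i \<le> d"
  shows "C (block i) < k" "C (block i) \<noteq> A" "C (block i) \<noteq> B" "A \<noteq> C (block i)" "B \<noteq> C (block i)"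
  using colours assms block_bounds[OF even_d assms] by (auto simp: valid_colors_def)

lemma root_colours_not_block [simp]: "A \<notin> C ` {1..d div 2}" "B \<notin> C ` {1..d div 2}"
  using colours by (auto simp: valid_colors_def)

lemma block_colour_eq_iff:
  assumes "1 \<le> a" "a \<le> d" "1 \<le> i" "i \<le> d"
  shows "C (block a) = C (block i) \<longleftrightarrow> a = i \<or> a = partner i"
  using colours assms block_bounds[OF even_d] block_eq_iff[of a i]
  by (auto simp: valid_colors_def dest: inj_onD)

text \<open>Both lower bounds are needed as simplification rules, since the simplifier normalises 1 to
  Suc 0.\<close>
lemma partner [simp]:
  assumes "1 \<le> i" "i \<le> d"
  shows "0 < partner i" "Suc 0 \<le> partner i" "partner i \<le> d" "partner i \<noteq> i" "i \<noteq> partner i"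
    "block (partner i) = block i"
  using partner_bounds[OF even_d assms] partner_neq[OF assms(1)] block_partner[OF assms(1)] by auto

definition leaf_count :: "nat \<Rightarrow> (nat \<times> nat \<Rightarrow> nat) \<Rightarrow> nat \<Rightarrow> nat \<Rightarrow> nat" where
  "leaf_count c x a b = of_bool (x (a, 2) = c) + of_bool (x (a, 3) = c) + of_bool (x (b, 2) = c) + of_bool (x (b, 3) = c)"

definition pair_base_potential :: "nat \<Rightarrow> (nat \<times> nat \<Rightarrow> nat) \<Rightarrow> nat \<Rightarrow> nat \<Rightarrow> real" where
  "pair_base_potential c x a b = of_bool ((x (a, 1) = B) \<noteq> (x (b, 1) = B)) + \<bar>real (leaf_count c x a b) - 2\<bar> - 2"

definition pair_potential :: "nat \<Rightarrow> (nat \<times> nat \<Rightarrow> nat) \<Rightarrow> nat \<Rightarrow> nat \<Rightarrow> real" where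
  "pair_potential c x a b = pair_base_potential c x a b + of_bool (x root = c) * of_bool (2 \<le> leaf_count c x a b)"

definition potential :: "(nat \<times> nat \<Rightarrow> nat) \<Rightarrow> real" where
  "potential x = of_bool (x root = A) + (\<Sum>j\<in>{1..d div 2}. pair_potential (C j) x (2 * j - 1) (2 * j))"

definition root_potential :: "(nat \<times> nat \<Rightarrow> nat) \<Rightarrow> real" where
  "root_potential x = of_bool (x root = A) +
     (\<Sum>j\<in>{1..d div 2}. of_bool (x root = C j) * of_bool (2 \<le> leaf_count (C j) x (2 * j - 1) (2 * j)))"

definition branch_dist :: "(nat \<times> nat \<Rightarrow> nat) \<Rightarrow> (nat \<times> nat \<Rightarrow> nat) \<Rightarrow> nat \<Rightarrow> real" where
  "branch_dist x y a = (\<Sum>t\<in>{1..3}. of_bool (x (a, t) \<noteq> y (a, t)))"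

lemma pair_potential_swap: "pair_potential c x a b = pair_potential c x b a"
  unfolding pair_potential_def pair_base_potential_def leaf_count_def by auto

lemma hamming_V:
  "real (hamming V x y) = of_bool (x root \<noteq> y root) + (\<Sum>j\<in>{1..d div 2}. branch_dist x y (2 * j - 1) + branch_dist x y (2 * j))"
proof -
  have "d = 2 * (d div 2)"
    using even_d by simp
  then have "(\<Sum>i\<in>{1..d}. branch_dist x y i) = (\<Sum>j\<in>{1..d div 2}. branch_dist x y (2 * j - 1) + branch_dist x y (2 * j))"
    by (metis sum_pairs)
  then show ?thesis
    by (simp add: V1_eq_Vpath hamming_Vpath branch_dist_def)
qed

lemma leaf_count_diff_le:
  "\<bar>real (leaf_count c x a b) - real (leaf_count c y a b)\<bar> \<le>
     (\<Sum>t\<in>{2, 3}. of_bool (x (a, t) \<noteq> y (a, t)) + of_bool (x (b, t) \<noteq> y (b, t)))"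
proof -
  have indicator: "\<bar>of_bool (u = c) - of_bool (v = c)\<bar> \<le> (of_bool (u \<noteq> v) :: real)" for u v
    by auto
  show ?thesis
    using indicator[of "x (a, 2)" "y (a, 2)"] indicator[of "x (a, 3)" "y (a, 3)"]
      indicator[of "x (b, 2)" "y (b, 2)"] indicator[of "x (b, 3)" "y (b, 3)"]
    unfolding leaf_count_def abs_le_iff by simp
qed

lemma pair_base_potential_diff_le:
  "pair_base_potential c x a b - pair_base_potential c y a b \<le> branch_dist x y a + branch_dist x y b"
proof -
  have "\<bar>real (leaf_count c x a b) - 2\<bar> - \<bar>real (leaf_count c y a b) - 2\<bar>
      \<le> \<bar>real (leaf_count c x a b) - real (leaf_count c y a b)\<bar>"
    by simp
  moreover have "of_bool ((x (a, 1) = B) \<noteq> (x (b, 1) = B)) - of_bool ((y (a, 1) = B) \<noteq> (y (b, 1) = B))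
      \<le> (of_bool (x (a, 1) \<noteq> y (a, 1)) + of_bool (x (b, 1) \<noteq> y (b, 1)) :: real)"
    by auto
  ultimately show ?thesis
    using leaf_count_diff_le[of c x a b y]
    unfolding pair_base_potential_def branch_dist_def sum_1_3 by simp
qed

lemma pair_potential_diff_le:
  assumes "x root = y root"
  shows "pair_potential c x a b - pair_potential c y a b \<le> branch_dist x y a + branch_dist x y b"
proof -
  have "(\<bar>real (leaf_count c x a b) - 2\<bar> + of_bool (y root = c) * of_bool (2 \<le> leaf_count c x a b)) -
      (\<bar>real (leaf_count c y a b) - 2\<bar> + of_bool (y root = c) * of_bool (2 \<le> leaf_count c y a b))
      \<le> \<bar>real (leaf_count c x a b) - real (leaf_count c y a b)\<bar>"
    by (rule abs_minus_two_plus_step_diff_le) auto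
  moreover have "of_bool ((x (a, 1) = B) \<noteq> (x (b, 1) = B)) - of_bool ((y (a, 1) = B) \<noteq> (y (b, 1) = B))
      \<le> (of_bool (x (a, 1) \<noteq> y (a, 1)) + of_bool (x (b, 1) \<noteq> y (b, 1)) :: real)"
    by auto
  ultimately show ?thesis
    using leaf_count_diff_le[of c x a b y] assms
    unfolding pair_potential_def pair_base_potential_def branch_dist_def sum_1_3 by simp
qed

lemma root_potential_bounds: "0 \<le> root_potential x" "root_potential x \<le> 1"
proof -
  show "0 \<le> root_potential x"
    unfolding root_potential_def by (intro add_nonneg_nonneg sum_nonneg) auto
  have "(\<Sum>j\<in>{1..d div 2}. of_bool (x root = C j) * of_bool (2 \<le> leaf_count (C j) x (2 * j - 1) (2 * j)))
      \<le> (1::real)"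
    using colours by (intro sum_indicator_inj_le_1) (auto simp: valid_colors_def)
  moreover have "(\<Sum>j\<in>{1..d div 2}. of_bool (x root = C j) * of_bool (2 \<le> leaf_count (C j) x (2 * j - 1) (2 * j)))
      = (0::real)" if "x root = A"
    using that colours by (intro sum.neutral) (auto simp: valid_colors_def)
  ultimately show "root_potential x \<le> 1"
    unfolding root_potential_def by (cases "x root = A") auto
qed

lemma potential_eq_root_potential:
  "potential x = root_potential x + (\<Sum>j\<in>{1..d div 2}. pair_base_potential (C j) x (2 * j - 1) (2 * j))"
  unfolding potential_def root_potential_def pair_potential_def sum.distrib by simp

lemma potential_Lipschitz: "potential x - potential y \<le> real (hamming V x y)"
proof (cases "x root = y root")
  case True
  have "potential x - potential y =
      (\<Sum>j\<in>{1..d div 2}. pair_potential (C j) x (2 * j - 1) (2 * j) - pair_potential (C j) y (2 * j - 1) (2 * j))"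
    using True by (simp add: potential_def sum_subtractf)
  also have "\<dots> \<le> (\<Sum>j\<in>{1..d div 2}. branch_dist x y (2 * j - 1) + branch_dist x y (2 * j))"
    by (intro sum_mono pair_potential_diff_le True)
  also have "\<dots> \<le> real (hamming V x y)"
    by (simp add: hamming_V)
  finally show ?thesis .
next
  case False
  have "potential x - potential y \<le> 1 + (\<Sum>j\<in>{1..d div 2}.
      pair_base_potential (C j) x (2 * j - 1) (2 * j) - pair_base_potential (C j) y (2 * j - 1) (2 * j))"
    using root_potential_bounds[of x] root_potential_bounds[of y]
    unfolding potential_eq_root_potential sum_subtractf by linarith
  also have "\<dots> \<le> 1 + (\<Sum>j\<in>{1..d div 2}. branch_dist x y (2 * j - 1) + branch_dist x y (2 * j))"
    by (intro add_left_mono sum_mono pair_base_potential_diff_le)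
  also have "\<dots> = real (hamming V x y)"
    using False by (simp add: hamming_V)
  finally show ?thesis .
qed

definition neutral_branch :: "(nat \<times> nat \<Rightarrow> nat) \<Rightarrow> nat \<Rightarrow> bool" where
  "neutral_branch x a \<longleftrightarrow> x (a, 1) \<noteq> B \<and> x (a, 2) \<noteq> C (block a) \<and> x (a, 3) \<noteq> C (block a)"

lemma pair_potential_neutral:
  assumes "neutral_branch x (2 * j - 1)" "neutral_branch x (2 * j)" "1 \<le> j"
  shows "pair_potential (C j) x (2 * j - 1) (2 * j) = 0"
  using assms block_odd[of j] block_even[of j]
  by (simp add: neutral_branch_def pair_potential_def pair_base_potential_def leaf_count_def)

lemma potential_eq_pair:
  assumes i: "1 \<le> i" "i \<le> d"
    and neutral: "\<And>a. 1 \<le> a \<Longrightarrow> a \<le> d \<Longrightarrow> a \<noteq> i \<Longrightarrow> a \<noteq> partner i \<Longrightarrow> neutral_branch x a"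
  shows "potential x = of_bool (x root = A) + pair_potential (C (block i)) x i (partner i)"
proof -
  have "(\<Sum>j\<in>{1..d div 2}. pair_potential (C j) x (2 * j - 1) (2 * j)) =
      (\<Sum>j\<in>{block i}. pair_potential (C j) x (2 * j - 1) (2 * j))"
  proof (rule sum.mono_neutral_right)
    show "\<forall>j\<in>{1..d div 2} - {block i}. pair_potential (C j) x (2 * j - 1) (2 * j) = 0"
    proof
      fix j assume j: "j \<in> {1..d div 2} - {block i}"
      then have "2 * j - 1 \<noteq> i" "2 * j - 1 \<noteq> partner i" "2 * j \<noteq> i" "2 * j \<noteq> partner i"
        using i block_odd[of j] block_even[of j] block_partner[of i] by auto
      then show "pair_potential (C j) x (2 * j - 1) (2 * j) = 0"
        using j even_d by (intro pair_potential_neutral neutral) auto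
    qed
  qed (use block_bounds[OF even_d i] in auto)
  also have "\<dots> = pair_potential (C (block i)) x i (partner i)"
    using pair_of_block[OF i(1)] pair_potential_swap by auto
  finally show ?thesis
    by (simp add: potential_def)
qed

lemma potential_eq_root:
  assumes "\<And>a. 1 \<le> a \<Longrightarrow> a \<le> d \<Longrightarrow> neutral_branch x a"
  shows "potential x = of_bool (x root = A)"
proof -
  have "pair_potential (C j) x (2 * j - 1) (2 * j) = 0" if "j \<in> {1..d div 2}" for j
    using that even_d by (intro pair_potential_neutral assms) auto
  then show ?thesis
    by (simp add: potential_def)
qed

lemma neutral_branch_sigma_tau: "1 \<le> a \<Longrightarrow> a \<le> d \<Longrightarrow> y = \<sigma> \<or> y = \<tau> \<Longrightarrow> neutral_branch y a"
  by (auto simp: neutral_branch_def)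

lemma potential_sigma: "potential \<sigma> = 1"
  using potential_eq_root neutral_branch_sigma_tau by simp

lemma potential_tau: "potential \<tau> = 0"
  using potential_eq_root neutral_branch_sigma_tau by simp

definition pair_vertices :: "nat \<Rightarrow> (nat \<times> nat) set" where
  "pair_vertices i = {root, (i, 1), (i, 2), (i, 3), (partner i, 1), (partner i, 2), (partner i, 3)}"

definition root_and_pair :: "nat \<Rightarrow> (nat \<times> nat) set" where
  "root_and_pair i = {root, (i, 1), (partner i, 1)}"

definition branch :: "nat \<Rightarrow> (nat \<times> nat) set" where
  "branch i = {(i, 1), (i, 2), (i, 3)}"

lemma potential_flip_in_pair:
  assumes i: "1 \<le> i" "i \<le> d" and "S \<subseteq> pair_vertices i" and "y = \<sigma> \<or> y = \<tau>"
  shows "potential (flip_set y S e c) =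
    of_bool (flip_set y S e c root = A) + pair_potential (C (block i)) (flip_set y S e c) i (partner i)"
proof (rule potential_eq_pair[OF i])
  fix a assume a: "1 \<le> a" "a \<le> d" "a \<noteq> i" "a \<noteq> partner i"
  then have "(a, t) \<notin> S" for t
    using assms(3) by (auto simp: pair_vertices_def)
  then show "neutral_branch (flip_set y S e c) a"
    using neutral_branch_sigma_tau[OF a(1,2) assms(4)] by (simp add: neutral_branch_def flip_set_def)
qed

lemma potential_flip_sigma_pair:
  assumes i: "1 \<le> i" "i \<le> d"
  shows "potential (flip_set \<sigma> (pair_vertices i) A (C (block i))) = 1"
  using i by (subst potential_flip_in_pair[OF i order_refl])
    (auto simp: flip_set_def pair_vertices_def pair_potential_def pair_base_potential_def leaf_count_def)

lemma potential_flip_tau_root_and_pair: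
  assumes i: "1 \<le> i" "i \<le> d"
  shows "potential (flip_set \<tau> (root_and_pair i) B (C (block i))) = 0"
  using i by (subst potential_flip_in_pair[OF i])
    (auto simp: flip_set_def root_and_pair_def pair_vertices_def pair_potential_def pair_base_potential_def
      leaf_count_def)

lemma potential_flip_tau_branch:
  assumes i: "1 \<le> i" "i \<le> d"
  shows "potential (flip_set \<tau> (branch i) (C (block i)) A) = -2"
  using i by (subst potential_flip_in_pair[OF i])
    (auto simp: flip_set_def branch_def pair_vertices_def pair_potential_def pair_base_potential_def
      leaf_count_def)

lemma potential_update_root: "y = \<sigma> \<or> y = \<tau> \<Longrightarrow> potential (y(root := c)) = of_bool (c = A)"
  by (subst potential_eq_root) (auto simp: neutral_branch_def)

lemma potential_update_in_pair:
  assumes i: "1 \<le> i" "i \<le> d" and t: "t \<in> {1, 2, 3}" and y: "y = \<sigma> \<or> y = \<tau>"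
  shows "potential (y((i, t) := c)) = of_bool (y root = A) + pair_potential (C (block i)) (y((i, t) := c)) i (partner i)"
proof -
  have "{(i, t)} \<subseteq> pair_vertices i"
    using t by (auto simp: pair_vertices_def)
  from potential_flip_in_pair[OF i this y, of "y (i, t)" c] show ?thesis
    using i by (simp add: flip_set_singleton)
qed

lemma potential_sigma_update_first:
  assumes i: "1 \<le> i" "i \<le> d"
  shows "potential (\<sigma>((i, 1) := c)) = 1 + of_bool (c = B)"
  using i by (subst potential_update_in_pair[OF i])
    (auto simp: pair_potential_def pair_base_potential_def leaf_count_def)

lemma potential_sigma_update_leaf:
  assumes i: "1 \<le> i" "i \<le> d" and t: "t = 2 \<or> t = 3" and c: "c \<noteq> C (block i)"
  shows "potential (\<sigma>((i, t) := c)) = 1"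
  using i t c by (subst potential_update_in_pair[OF i])
    (auto simp: pair_potential_def pair_base_potential_def leaf_count_def)

lemma potential_tau_update_first:
  assumes i: "1 \<le> i" "i \<le> d" and c: "c \<noteq> B"
  shows "potential (\<tau>((i, 1) := c)) = 0"
  using i c by (subst potential_update_in_pair[OF i])
    (auto simp: pair_potential_def pair_base_potential_def leaf_count_def)

lemma potential_tau_update_leaf:
  assumes i: "1 \<le> i" "i \<le> d" and t: "t = 2 \<or> t = 3" and c: "c \<noteq> C (block i)"
  shows "potential (\<tau>((i, t) := c)) = 0"
  using i t c by (subst potential_update_in_pair[OF i])
    (auto simp: pair_potential_def pair_base_potential_def leaf_count_def)

lemma kempe_sigma_root_pair:
  assumes i: "1 \<le> i" "i \<le> d"
  shows "kempe V E \<sigma> root (C (block i)) = pair_vertices i"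
proof (rule kempe_eqI)
  fix x y assume "x \<in> pair_vertices i" "y \<in> V" "E x y" "\<sigma> y \<in> {\<sigma> root, C (block i)}"
  then show "y \<in> pair_vertices i"
    using i partner[OF i] by (auto simp: pair_vertices_def E_iff block_colour_eq_iff)
next
  have r0: "kempe_reach V E \<sigma> (C (block i)) root root"
    by (rule kempe_reach.base) (simp add: V_eq)
  have r1: "kempe_reach V E \<sigma> (C (block i)) root (a, 1)" if "a = i \<or> a = partner i" for a
    by (rule kempe_reach.step[OF r0]) (use i that partner[OF i] in \<open>auto simp: E_iff V_eq\<close>)
  have r2: "kempe_reach V E \<sigma> (C (block i)) root (a, t)" if "a = i \<or> a = partner i" "t = 2 \<or> t = 3" for a t
    by (rule kempe_reach.step[OF r1[OF that(1)]]) (use i that partner[OF i] in \<open>auto simp: E_iff V_eq\<close>)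
  fix y assume "y \<in> pair_vertices i"
  then show "kempe_reach V E \<sigma> (C (block i)) root y"
    using r0 r1 r2 by (auto simp: pair_vertices_def)
qed (use i in \<open>auto simp: pair_vertices_def\<close>)

lemma kempe_tau_root_pair:
  assumes i: "1 \<le> i" "i \<le> d"
  shows "kempe V E \<tau> root (C (block i)) = root_and_pair i"
proof (rule kempe_eqI)
  fix x y assume "x \<in> root_and_pair i" "y \<in> V" "E x y" "\<tau> y \<in> {\<tau> root, C (block i)}"
  then show "y \<in> root_and_pair i"
    using i partner[OF i] by (auto simp: root_and_pair_def E_iff block_colour_eq_iff)
next
  have r0: "kempe_reach V E \<tau> (C (block i)) root root"
    by (rule kempe_reach.base) (simp add: V_eq)
  have r1: "kempe_reach V E \<tau> (C (block i)) root (a, 1)" if "a = i \<or> a = partner i" for a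
    by (rule kempe_reach.step[OF r0]) (use i that partner[OF i] in \<open>auto simp: E_iff V_eq\<close>)
  fix y assume "y \<in> root_and_pair i"
  then show "kempe_reach V E \<tau> (C (block i)) root y"
    using r0 r1 by (auto simp: root_and_pair_def)
qed (use i in \<open>auto simp: root_and_pair_def\<close>)

lemma kempe_tau_branch:
  assumes i: "1 \<le> i" "i \<le> d"
  shows "kempe V E \<tau> (i, 1) A = branch i"
proof (rule kempe_eqI)
  fix x y assume "x \<in> branch i" "y \<in> V" "E x y" "\<tau> y \<in> {\<tau> (i, 1), A}"
  then show "y \<in> branch i"
    using i by (auto simp: branch_def E_iff)
next
  have r0: "kempe_reach V E \<tau> A (i, 1) (i, 1)"
    by (rule kempe_reach.base) (use i in \<open>simp add: V_eq\<close>)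
  have r1: "kempe_reach V E \<tau> A (i, 1) (i, t)" if "t = 2 \<or> t = 3" for t
    by (rule kempe_reach.step[OF r0]) (use i that in \<open>auto simp: E_iff V_eq\<close>)
  fix y assume "y \<in> branch i"
  then show "kempe_reach V E \<tau> A (i, 1) y"
    using r0 r1 by (auto simp: branch_def)
qed (use i in \<open>auto simp: branch_def\<close>)

context
  fixes p :: "nat \<Rightarrow> real"
begin

abbreviation "drift \<equiv> flip_drift V E p potential"

lemma drift_sigma_root_pair:
  assumes i: "1 \<le> i" "i \<le> d"
  shows "drift \<sigma> root (C (block i)) = 0"
  unfolding flip_drift_def kempe_sigma_root_pair[OF i]
  using potential_flip_sigma_pair[OF i] by (simp add: potential_sigma)

lemma drift_sigma_root_other:
  assumes "c \<noteq> A" "c \<notin> C ` {1..d div 2}"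
  shows "drift \<sigma> root c = - p 1"
proof -
  have "kempe V E \<sigma> root c = {root}"
  proof (rule kempe_eq_singleton)
    show "\<sigma> y \<noteq> c" if "y \<in> V" "E root y" for y
      using that assms(2) block_bounds[OF even_d] by (fastforce simp: E_iff)
  qed (use assms in \<open>auto simp: V_eq\<close>)
  then show ?thesis
    using assms by (simp add: flip_drift_singleton potential_update_root potential_sigma)
qed

lemma drift_sigma_first_other:
  assumes i: "1 \<le> i" "i \<le> d" and c: "c \<noteq> A" "c \<noteq> C (block i)"
  shows "drift \<sigma> (i, 1) c = p 1 * of_bool (c = B)"
proof -
  have "kempe V E \<sigma> (i, 1) c = {(i, 1)}"
    by (rule kempe_eq_singleton) (use i c in \<open>auto simp: E_iff V_eq\<close>)
  then show ?thesis
    using i potential_sigma_update_first[OF i, of c] by (simp add: flip_drift_singleton potential_sigma)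
qed

lemma drift_sigma_leaf_other:
  assumes i: "1 \<le> i" "i \<le> d" and t: "t = 2 \<or> t = 3" and c: "c \<noteq> A" "c \<noteq> C (block i)"
  shows "drift \<sigma> (i, t) c = 0"
proof -
  have "kempe V E \<sigma> (i, t) c = {(i, t)}"
    by (rule kempe_eq_singleton) (use i t c in \<open>auto simp: E_iff V_eq\<close>)
  then show ?thesis
    using i t c by (simp add: flip_drift_singleton potential_sigma_update_leaf potential_sigma)
qed

lemma drift_sigma_pair_components:
  assumes i: "1 \<le> i" "i \<le> d" and t: "t = 2 \<or> t = 3"
  shows "drift \<sigma> (i, 1) A = 0" "drift \<sigma> (i, t) (C (block i)) = 0"
proof -
  have "(i, 1) \<in> kempe V E \<sigma> root (C (block i))" "(i, t) \<in> kempe V E \<sigma> root (C (block i))"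
    using t kempe_sigma_root_pair[OF i] by (auto simp: pair_vertices_def)
  from this[THEN flip_drift_eq_of_mem[OF symp_E1]] show
    "drift \<sigma> (i, 1) A = 0" "drift \<sigma> (i, t) (C (block i)) = 0"
    using i t drift_sigma_root_pair[OF i] by (auto simp: insert_commute)
qed

lemma drift_tau_root_pair:
  assumes i: "1 \<le> i" "i \<le> d"
  shows "drift \<tau> root (C (block i)) = 0"
  unfolding flip_drift_def kempe_tau_root_pair[OF i]
  using potential_flip_tau_root_and_pair[OF i] by (simp add: potential_tau)

lemma drift_tau_root_other:
  assumes "c \<noteq> B" "c \<notin> C ` {1..d div 2}"
  shows "drift \<tau> root c = p 1 * of_bool (c = A)"
proof -
  have "kempe V E \<tau> root c = {root}"
  proof (rule kempe_eq_singleton)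
    show "\<tau> y \<noteq> c" if "y \<in> V" "E root y" for y
      using that assms(2) block_bounds[OF even_d] by (fastforce simp: E_iff)
  qed (use assms in \<open>auto simp: V_eq\<close>)
  then show ?thesis
    by (simp add: flip_drift_singleton potential_update_root potential_tau)
qed

lemma drift_tau_branch:
  assumes i: "1 \<le> i" "i \<le> d"
  shows "drift \<tau> (i, 1) A = - 2 * p 3 / 3"
proof -
  have "card (branch i) = 3"
    by (simp add: branch_def)
  then show ?thesis
    unfolding flip_drift_def kempe_tau_branch[OF i]
    using i potential_flip_tau_branch[OF i] by (simp add: potential_tau)
qed

lemma drift_tau_first_other:
  assumes i: "1 \<le> i" "i \<le> d" and c: "c \<noteq> A" "c \<noteq> B" "c \<noteq> C (block i)"
  shows "drift \<tau> (i, 1) c = 0"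
proof -
  have "kempe V E \<tau> (i, 1) c = {(i, 1)}"
    by (rule kempe_eq_singleton) (use i c in \<open>auto simp: E_iff V_eq\<close>)
  then show ?thesis
    using i c potential_tau_update_first[OF i c(2)] by (simp add: flip_drift_singleton potential_tau)
qed

lemma drift_tau_leaf_other:
  assumes i: "1 \<le> i" "i \<le> d" and t: "t = 2 \<or> t = 3" and c: "c \<noteq> A" "c \<noteq> C (block i)"
  shows "drift \<tau> (i, t) c = 0"
proof -
  have "kempe V E \<tau> (i, t) c = {(i, t)}"
    by (rule kempe_eq_singleton) (use i t c in \<open>auto simp: E_iff V_eq\<close>)
  then show ?thesis
    using i t c by (simp add: flip_drift_singleton potential_tau_update_leaf potential_tau)
qed

lemma drift_tau_components:
  assumes i: "1 \<le> i" "i \<le> d" and t: "t = 2 \<or> t = 3"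
  shows "drift \<tau> (i, 1) B = 0" "drift \<tau> (i, t) (C (block i)) = - 2 * p 3 / 3"
proof -
  have "(i, 1) \<in> kempe V E \<tau> root (C (block i))" "(i, t) \<in> kempe V E \<tau> (i, 1) A"
    using t kempe_tau_root_pair[OF i] kempe_tau_branch[OF i] by (auto simp: root_and_pair_def branch_def)
  from this[THEN flip_drift_eq_of_mem[OF symp_E1]] show
    "drift \<tau> (i, 1) B = 0" "drift \<tau> (i, t) (C (block i)) = - 2 * p 3 / 3"
    using i t drift_tau_root_pair[OF i] drift_tau_branch[OF i] by (auto simp: insert_commute)
qed

lemma drift_root_block_colour:
  assumes "j \<in> {1..d div 2}"
  shows "drift \<sigma> root (C j) = 0" "drift \<tau> root (C j) = 0"
proof -
  have i: "1 \<le> 2 * j - 1" "2 * j - 1 \<le> d" "block (2 * j - 1) = j"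
    using assms even_d block_odd[of j] by auto
  show "drift \<sigma> root (C j) = 0" "drift \<tau> root (C j) = 0"
    using drift_sigma_root_pair[OF i(1,2)] drift_tau_root_pair[OF i(1,2)] i(3) by simp_all
qed

lemma drift_sigma_at_root:
  "(\<Sum>c\<in>{0..<k}. drift \<sigma> root c) = - p 1 + (real k - 2 - real (d div 2)) * (- p 1)"
proof -
  have "(\<Sum>c\<in>{0..<k}. drift \<sigma> root c) =
      real (card {1..d div 2}) * 0 + (- p 1) + (real k - 2 - real (card {1..d div 2})) * (- p 1)"
  proof (rule sum_colours_by_class[where C = C and a = A and b = B])
    show "drift \<sigma> root c = - p 1" if "c < k" "c \<noteq> A" "c \<noteq> B" "c \<notin> C ` {1..d div 2}" for c
      by (rule drift_sigma_root_other[OF that(2,4)])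
  qed (use colours in \<open>auto simp: valid_colors_def flip_drift_self[of V E p potential \<sigma> root, simplified]
        drift_root_block_colour drift_sigma_root_other[OF root_colours(4) root_colours_not_block(2)]\<close>)
  then show ?thesis by simp
qed

lemma drift_sigma_on_branch:
  assumes i: "1 \<le> i" "i \<le> d"
  shows "(\<Sum>t\<in>{1..3}. \<Sum>c\<in>{0..<k}. drift \<sigma> (i, t) c) = p 1"
proof -
  have "(\<Sum>c\<in>{0..<k}. drift \<sigma> (i, 1) c) = drift \<sigma> (i, 1) A + drift \<sigma> (i, 1) B"
  proof (rule sum_colours_two_support)
    show "drift \<sigma> (i, 1) c = 0" if "c < k" "c \<noteq> A" "c \<noteq> B" for c
      using that i flip_drift_self[of V E p potential \<sigma> "(i, 1)"] drift_sigma_first_other[OF i, of c]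
      by (cases "c = C (block i)") auto
  qed simp_all
  moreover have "(\<Sum>c\<in>{0..<k}. drift \<sigma> (i, t) c) = 0" if t: "t = 2 \<or> t = 3" for t
  proof -
    have "(\<Sum>c\<in>{0..<k}. drift \<sigma> (i, t) c) = drift \<sigma> (i, t) (C (block i)) + drift \<sigma> (i, t) A"
      using i t drift_sigma_leaf_other[OF i t] by (intro sum_colours_two_support) auto
    then show ?thesis
      using i t flip_drift_self[of V E p potential \<sigma> "(i, t)"] drift_sigma_pair_components[OF i t] by auto
  qed
  ultimately show ?thesis
    unfolding sum_1_3 using i drift_sigma_pair_components[OF i, of 2] drift_sigma_first_other[OF i, of B] by simp
qed

lemma total_drift_sigma:
  "total_drift V E k p potential \<sigma> = (real d + real (d div 2) - real k + 1) * p 1"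
proof -
  have "(\<Sum>i\<in>{1..d}. \<Sum>t\<in>{1..3}. \<Sum>c\<in>{0..<k}. drift \<sigma> (i, t) c) = (\<Sum>i\<in>{1..d}. p 1)"
    by (rule sum.cong[OF refl], rule drift_sigma_on_branch) auto
  then show ?thesis
    by (simp add: total_drift_V drift_sigma_at_root algebra_simps)
qed

lemma drift_tau_at_root: "(\<Sum>c\<in>{0..<k}. drift \<tau> root c) = p 1"
proof -
  have "(\<Sum>c\<in>{0..<k}. drift \<tau> root c) =
      real (card {1..d div 2}) * 0 + p 1 + (real k - 2 - real (card {1..d div 2})) * 0"
  proof (rule sum_colours_by_class[where C = C and a = B and b = A])
    show "drift \<tau> root c = 0" if "c < k" "c \<noteq> B" "c \<noteq> A" "c \<notin> C ` {1..d div 2}" for c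
      using drift_tau_root_other[OF that(2,4)] that(3) by simp
  qed (use colours in \<open>auto simp: valid_colors_def flip_drift_self[of V E p potential \<tau> root, simplified]
        drift_root_block_colour drift_tau_root_other[OF root_colours(3) root_colours_not_block(1)]\<close>)
  then show ?thesis by simp
qed

lemma drift_tau_on_branch:
  assumes i: "1 \<le> i" "i \<le> d"
  shows "(\<Sum>t\<in>{1..3}. \<Sum>c\<in>{0..<k}. drift \<tau> (i, t) c) = - 2 * p 3"
proof -
  have "(\<Sum>c\<in>{0..<k}. drift \<tau> (i, 1) c) = drift \<tau> (i, 1) A + drift \<tau> (i, 1) B"
  proof (rule sum_colours_two_support)
    show "drift \<tau> (i, 1) c = 0" if "c < k" "c \<noteq> A" "c \<noteq> B" for c
      using that i flip_drift_self[of V E p potential \<tau> "(i, 1)"] drift_tau_first_other[OF i, of c]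
      by (cases "c = C (block i)") auto
  qed simp_all
  moreover have "(\<Sum>c\<in>{0..<k}. drift \<tau> (i, t) c) = - 2 * p 3 / 3" if t: "t = 2 \<or> t = 3" for t
  proof -
    have "(\<Sum>c\<in>{0..<k}. drift \<tau> (i, t) c) = drift \<tau> (i, t) (C (block i)) + drift \<tau> (i, t) A"
      using i t drift_tau_leaf_other[OF i t] by (intro sum_colours_two_support) auto
    then show ?thesis
      using i t flip_drift_self[of V E p potential \<tau> "(i, t)"] drift_tau_components[OF i t] by auto
  qed
  ultimately show ?thesis
    unfolding sum_1_3 using i drift_tau_components[OF i, of 2] drift_tau_branch[OF i] by simp
qed

lemma total_drift_tau: "total_drift V E k p potential \<tau> = p 1 - 2 * real d * p 3"
proof -
  have "(\<Sum>i\<in>{1..d}. \<Sum>t\<in>{1..3}. \<Sum>c\<in>{0..<k}. drift \<tau> (i, t) c) = (\<Sum>i\<in>{1..d}. - 2 * p 3)"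
    by (rule sum.cong[OF refl], rule drift_tau_on_branch) auto
  then show ?thesis
    by (simp add: total_drift_V drift_tau_at_root)
qed

end

lemma contracting_coupling_imp_bound:
  assumes "contracting_coupling V E k p \<sigma> \<tau>" "\<forall>\<alpha>. 0 \<le> p \<alpha> \<and> p \<alpha> \<le> 1"
  shows "(real d + real (d div 2) - real k) * p 1 + 2 * real d * p 3 < 0"
proof -
  have "total_drift V E k p potential \<sigma> < total_drift V E k p potential \<tau>"
  proof (rule contracting_coupling_imp_drift_less[OF assms(1) _ _ _ assms(2) potential_Lipschitz])
    show "finite V" "V \<noteq> {}" "k > 0"
      using finite_Vpath[of d 3] root_in_Vpath[of d 3] root_colours(1) unfolding V_eq by (blast, blast, linarith)
  qed (simp add: potential_sigma potential_tau)
  then show ?thesis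
    by (simp add: total_drift_sigma total_drift_tau algebra_simps)
qed

end

theorem lemma3p5:
  fixes d k :: nat and a b :: "nat \<Rightarrow> nat" and c :: "nat \<Rightarrow> nat \<Rightarrow> nat"
  assumes "even d"
    and "real k < 11 / 6 * real d"
    and "valid_colors k (d div 2) (a 1) (b 1) (c 1)"
    and "\<forall>m\<in>{2, 3, 4}. valid_colors k d (a m) (b m) (c m)"
  shows "\<not> (\<exists>p :: nat \<Rightarrow> real. (\<forall>\<alpha>. 0 \<le> p \<alpha> \<and> p \<alpha> \<le> 1) \<and>
            contracting_coupling (V1 d) (E1 d) k p
              (col1 (a 1) (a 1) (c 1)) (col1 (b 1) (a 1) (c 1)) \<and>
            (\<forall>m\<in>{2, 3, 4}. contracting_coupling (Vpath d m) (Epath d m) k p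
              (colpath (a m) (a m) (c m)) (colpath (b m) (a m) (c m))))"
proof (rule notI, elim exE conjE)
  fix p :: "nat \<Rightarrow> real"
  assume p: "\<forall>\<alpha>. 0 \<le> p \<alpha> \<and> p \<alpha> \<le> 1"
    and coupling1: "contracting_coupling (V1 d) (E1 d) k p (col1 (a 1) (a 1) (c 1)) (col1 (b 1) (a 1) (c 1))"
    and couplings: "\<forall>m\<in>{2, 3, 4}. contracting_coupling (Vpath d m) (Epath d m) k p
      (colpath (a m) (a m) (c m)) (colpath (b m) (a m) (c m))"
  interpret G1: pair_G1 d k "a 1" "b 1" "c 1"
    using assms(1,3) by unfold_locales
  interpret G2: pair_G2 d k "a 2" "b 2" "c 2"
    using assms(4) by unfold_locales simp
  have "(real d + real (d div 2) - real k) * p 1 + 2 * real d * p 3 < 0"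
    by (rule G1.contracting_coupling_imp_bound[OF coupling1 p])
  moreover have "(2 * real d - real k) * p 1 - real d * p 3 < 0"
    using G2.contracting_coupling_imp_bound couplings p by simp
  moreover have "(11 / 2 * real d - 3 * real k) * p 1 =
      ((real d + real (d div 2) - real k) * p 1 + 2 * real d * p 3) + 2 * ((2 * real d - real k) * p 1 - real d * p 3)"
    using \<open>even d\<close> by (auto elim!: evenE simp: algebra_simps)
  moreover have "0 \<le> (11 / 2 * real d - 3 * real k) * p 1"
    using assms(2) p by simp
  ultimately show False
    by argo
qed

end
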